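(* Let $A$ be a $d$-dimensional double permutation of order $n$, and suppose there is an integer $k$ with $2\le k\le d-1$ such that the support of every $k$-dimensional plane of $A$ and the support of every $(k+1)$-dimensional plane of $A$ is a connected bitrade. Then the support of $A$ is a connected bitrade.
   Context: A $d$-dimensional matrix of order $n$ is an array $A=(a_\alpha)_{\alpha\in I_n^d}$, $I_n^d=\{0,\dots,n-1\}^d$. A $k$-dimensional plane is obtained by fixing the values of $d-k$ coordinate positions and letting the other $k$ coordinates vary over $\{0,\dots,n-1\}$; a line is a $1$-dimensional plane. A double permutation is a polystochastic matrix (nonnegative, each line sums to $1$) all of whose entries lie in $\{0,1/2\}$. The support of a matrix (or plane) is the set of indices with nonzero entries; the support of a $k$-dimensional plane is regarded as a subset of a $k$-dimensional index set. A set $U$ of indices is a unitrade if every line contains either $0$ or $2$ elements of $U$. Consider the graph on $U$ in which two elements are adjacent iff they lie on a common line; $U$ is a bitrade if this graph is bipartite (equivalently there is $\sigma:U\to\{\pm1\}$ with $\sigma(\alpha)\ne\sigma(\beta)$ whenever $\alpha,\beta\in U$ lie on a common line), and $U$ is connected if this graph is connected. *)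

theory Defs
  imports Complex_Main
begin

definition idx :: "nat \<Rightarrow> nat \<Rightarrow> nat list set" where
  "idx d n = {x. length x = d \<and> (\<forall>j<d. x ! j < n)}"

definition line :: "nat \<Rightarrow> nat \<Rightarrow> nat \<Rightarrow> nat list \<Rightarrow> nat list set" where
  "line d n i x = {y \<in> idx d n. \<forall>j<d. j \<noteq> i \<longrightarrow> y ! j = x ! j}"

definition plane :: "nat \<Rightarrow> nat \<Rightarrow> nat set \<Rightarrow> nat list \<Rightarrow> nat list set" where
  "plane d n K x = {y \<in> idx d n. \<forall>j<d. j \<notin> K \<longrightarrow> y ! j = x ! j}"

definition polystochastic :: "nat \<Rightarrow> nat \<Rightarrow> (nat list \<Rightarrow> real) \<Rightarrow> bool" where
  "polystochastic d n A \<longleftrightarrow>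
     (\<forall>x\<in>idx d n. A x \<ge> 0) \<and>
     (\<forall>i<d. \<forall>x\<in>idx d n. (\<Sum>y\<in>line d n i x. A y) = 1)"

definition double_permutation :: "nat \<Rightarrow> nat \<Rightarrow> (nat list \<Rightarrow> real) \<Rightarrow> bool" where
  "double_permutation d n A \<longleftrightarrow>
     polystochastic d n A \<and> (\<forall>x\<in>idx d n. A x = 0 \<or> A x = 1/2)"

definition support :: "nat \<Rightarrow> nat \<Rightarrow> (nat list \<Rightarrow> real) \<Rightarrow> nat list set" where
  "support d n A = {x \<in> idx d n. A x \<noteq> 0}"

definition adjacent :: "nat \<Rightarrow> nat \<Rightarrow> nat list \<Rightarrow> nat list \<Rightarrow> bool" where
  "adjacent d n a b \<longleftrightarrow> a \<noteq> b \<and> (\<exists>i<d. b \<in> line d n i a)"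

definition unitrade_in :: "nat \<Rightarrow> nat \<Rightarrow> nat set \<Rightarrow> nat list set \<Rightarrow> nat list set \<Rightarrow> bool" where
  "unitrade_in d n K P U \<longleftrightarrow>
     (\<forall>x\<in>P. \<forall>i\<in>K. card (U \<inter> line d n i x) = 0 \<or> card (U \<inter> line d n i x) = 2)"

definition bitrade_in :: "nat \<Rightarrow> nat \<Rightarrow> nat set \<Rightarrow> nat list set \<Rightarrow> nat list set \<Rightarrow> bool" where
  "bitrade_in d n K P U \<longleftrightarrow> unitrade_in d n K P U \<and>
     (\<exists>\<sigma> :: nat list \<Rightarrow> bool. \<forall>a\<in>U. \<forall>b\<in>U. adjacent d n a b \<longrightarrow> \<sigma> a \<noteq> \<sigma> b)"

definition connected_set :: "nat \<Rightarrow> nat \<Rightarrow> nat list set \<Rightarrow> bool" where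
  "connected_set d n U \<longleftrightarrow>
     (\<forall>a\<in>U. \<forall>b\<in>U. (a, b) \<in> {(x, y). x \<in> U \<and> y \<in> U \<and> adjacent d n x y}\<^sup>*)"

definition connected_bitrade_in :: "nat \<Rightarrow> nat \<Rightarrow> nat set \<Rightarrow> nat list set \<Rightarrow> nat list set \<Rightarrow> bool" where
  "connected_bitrade_in d n K P U \<longleftrightarrow> bitrade_in d n K P U \<and> connected_set d n U"

end

theory Submission
  imports Defs
begin

text \<open>
  Induction on the dimension: if the supports of all m- and (m+1)-dimensional planes are
  connected bitrades, then so are those of the (m+2)-dimensional planes. The only property of
  the support used besides the unitrade condition is that it meets every line.

  Connectivity: two support points a, b of a plane with three free directions i, j, l are
  joined through a support point c on the l-line through a with its i-th coordinate replaced
  by b's; c lies in the hyperplane through a normal to j and in the one through b normal to i.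

  Bipartiteness: slice the plane P into layers orthogonal to direction i, fix a hyperplane V
  of P normal to l, colour V, and normalise the colouring of each layer so that it agrees
  with that of V on their intersection, which is connected. The glued colouring is proper
  inside layers; an edge across layers lies in a hyperplane W normal to j, and the glued
  colouring differs from a colouring of W by a constant, because W is covered by connected
  slices of codimension two in P, each meeting the connected set W \<inter> V. A fourth
  direction g is needed to produce the common points of these slices with W \<inter> V.
\<close>

definition proper_colouring :: "nat \<Rightarrow> nat \<Rightarrow> nat list set \<Rightarrow> (nat list \<Rightarrow> bool) \<Rightarrow> bool" where
  "proper_colouring d n U s \<longleftrightarrow> (\<forall>a\<in>U. \<forall>b\<in>U. adjacent d n a b \<longrightarrow> s a \<noteq> s b)"

definition bipartite_set :: "nat \<Rightarrow> nat \<Rightarrow> nat list set \<Rightarrow> bool" where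
  "bipartite_set d n U \<longleftrightarrow> (\<exists>s. proper_colouring d n U s)"

lemma bitrade_in_iff: "bitrade_in d n K P U \<longleftrightarrow> unitrade_in d n K P U \<and> bipartite_set d n U"
  unfolding bitrade_in_def bipartite_set_def proper_colouring_def ..

lemma proper_colouring_subset: "proper_colouring d n U s \<Longrightarrow> V \<subseteq> U \<Longrightarrow> proper_colouring d n V s"
  unfolding proper_colouring_def by blast

lemma connected_set_empty [simp]: "connected_set d n {}"
  unfolding connected_set_def by simp

lemma proper_colouring_empty [simp]: "proper_colouring d n {} s"
  unfolding proper_colouring_def by simp

lemma bipartite_set_empty [simp]: "bipartite_set d n {}"
  unfolding bipartite_set_def proper_colouring_def by simp

lemma proper_colourings_differ_uniformly:
  assumes "connected_set d n U" "U \<subseteq> U1" "U \<subseteq> U2"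
    and "proper_colouring d n U1 s1" "proper_colouring d n U2 s2" "u \<in> U" "w \<in> U"
  shows "(s1 u \<noteq> s2 u) = (s1 w \<noteq> s2 w)"
proof -
  have "(u, w) \<in> {(x, y). x \<in> U \<and> y \<in> U \<and> adjacent d n x y}\<^sup>*"
    using assms(1,6,7) unfolding connected_set_def by blast
  then show ?thesis
  proof (induction rule: rtrancl_induct)
    case (step y z)
    then have "s1 y \<noteq> s1 z" "s2 y \<noteq> s2 z"
      using assms(2-5) unfolding proper_colouring_def by blast+
    with step.IH show ?case by auto
  qed simp
qed

lemma connected_set_link:
  assumes "connected_set d n U1" "connected_set d n U2" "U1 \<subseteq> U" "U2 \<subseteq> U"
    and "a \<in> U1" "c \<in> U1" "c \<in> U2" "b \<in> U2"
  shows "(a, b) \<in> {(x, y). x \<in> U \<and> y \<in> U \<and> adjacent d n x y}\<^sup>*"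
proof -
  have mono: "{(x, y). x \<in> V \<and> y \<in> V \<and> adjacent d n x y}\<^sup>*
      \<subseteq> {(x, y). x \<in> U \<and> y \<in> U \<and> adjacent d n x y}\<^sup>*" if "V \<subseteq> U" for V
    by (rule rtrancl_mono) (use that in auto)
  have "(a, c) \<in> {(x, y). x \<in> U \<and> y \<in> U \<and> adjacent d n x y}\<^sup>*"
    using assms(1,5,6) mono[OF assms(3)] unfolding connected_set_def by blast
  moreover have "(c, b) \<in> {(x, y). x \<in> U \<and> y \<in> U \<and> adjacent d n x y}\<^sup>*"
    using assms(2,7,8) mono[OF assms(4)] unfolding connected_set_def by blast
  ultimately show ?thesis by (rule rtrancl_trans)
qed

lemma proper_colouring_glue_layers:
  fixes lay :: "nat list \<Rightarrow> 'a"
  assumes layers: "\<And>t. proper_colouring d n {u \<in> U. lay u = t} (c t)"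
    and core: "proper_colouring d n V \<rho>"
    and overlaps: "\<And>t. connected_set d n {u \<in> U \<inter> V. lay u = t}"
  obtains \<sigma> where "\<And>u. u \<in> U \<inter> V \<Longrightarrow> \<sigma> u = \<rho> u"
    and "\<And>t. proper_colouring d n {u \<in> U. lay u = t} \<sigma>"
proof -
  \<comment> \<open>a representative of layer t in V; arbitrary (and irrelevant) if the layer misses V\<close>
  define r where "r t = (SOME q. q \<in> U \<inter> V \<and> lay q = t)" for t
  define \<sigma> where "\<sigma> u = (c (lay u) u \<noteq> (c (lay u) (r (lay u)) \<noteq> \<rho> (r (lay u))))" for u
  have "\<sigma> u = \<rho> u" if u: "u \<in> U \<inter> V" for u
  proof -
    let ?O = "{v \<in> U \<inter> V. lay v = lay u}"
    have "r (lay u) \<in> U \<inter> V \<and> lay (r (lay u)) = lay u"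
      unfolding r_def by (rule someI[of _ u]) (use u in simp)
    then have "r (lay u) \<in> ?O" "u \<in> ?O" using u by auto
    moreover have "?O \<subseteq> {v \<in> U. lay v = lay u}" "?O \<subseteq> V" by auto
    ultimately have "(c (lay u) u \<noteq> \<rho> u) = (c (lay u) (r (lay u)) \<noteq> \<rho> (r (lay u)))"
      using proper_colourings_differ_uniformly[OF overlaps _ _ layers core] by blast
    then show ?thesis unfolding \<sigma>_def by auto
  qed
  moreover have "proper_colouring d n {u \<in> U. lay u = t} \<sigma>" for t
    using layers[of t] unfolding proper_colouring_def \<sigma>_def by auto
  ultimately show ?thesis using that by blast
qed

lemma proper_colouring_of_connected_cover:
  assumes \<tau>: "proper_colouring d n W \<tau>"
    and core: "connected_set d n C" "C \<subseteq> W" "proper_colouring d n C \<sigma>"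
    and cover: "\<And>u. u \<in> W \<Longrightarrow> \<exists>Y. u \<in> Y \<and> Y \<subseteq> W \<and> Y \<inter> C \<noteq> {}
                     \<and> connected_set d n Y \<and> proper_colouring d n Y \<sigma>"
  shows "proper_colouring d n W \<sigma>"
proof -
  have to_core: "\<exists>q\<in>C. (\<sigma> u \<noteq> \<tau> u) = (\<sigma> q \<noteq> \<tau> q)" if u: "u \<in> W" for u
  proof -
    obtain Y where Y: "u \<in> Y" "Y \<subseteq> W" "Y \<inter> C \<noteq> {}" "connected_set d n Y"
      "proper_colouring d n Y \<sigma>"
      using cover[OF u] by blast
    then obtain q where "q \<in> Y" "q \<in> C" by blast
    moreover have "(\<sigma> u \<noteq> \<tau> u) = (\<sigma> q \<noteq> \<tau> q)"
      by (rule proper_colourings_differ_uniformly[OF Y(4) order_refl Y(2) Y(5) \<tau> Y(1) \<open>q \<in> Y\<close>])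
    ultimately show ?thesis by blast
  qed
  have uniform: "(\<sigma> u \<noteq> \<tau> u) = (\<sigma> w \<noteq> \<tau> w)" if uw: "u \<in> W" "w \<in> W" for u w
  proof -
    obtain q q' where "q \<in> C" "q' \<in> C"
      "(\<sigma> u \<noteq> \<tau> u) = (\<sigma> q \<noteq> \<tau> q)" "(\<sigma> w \<noteq> \<tau> w) = (\<sigma> q' \<noteq> \<tau> q')"
      using to_core[OF uw(1)] to_core[OF uw(2)] by blast
    moreover have "(\<sigma> q \<noteq> \<tau> q) = (\<sigma> q' \<noteq> \<tau> q')"
      using proper_colourings_differ_uniformly[OF core(1) order_refl core(2) core(3) \<tau>] calculation(1,2) .
    ultimately show ?thesis by simp
  qed
  show ?thesis
    unfolding proper_colouring_def
  proof (intro ballI impI)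
    fix a b assume "a \<in> W" "b \<in> W" "adjacent d n a b"
    with \<tau> uniform show "\<sigma> a \<noteq> \<sigma> b" unfolding proper_colouring_def by blast
  qed
qed

lemma finite_idx: "finite (idx d n)"
proof -
  have "idx d n \<subseteq> {xs. set xs \<subseteq> {..<n} \<and> length xs = d}"
    unfolding idx_def by (auto simp: in_set_conv_nth)
  moreover have "finite {xs. set xs \<subseteq> {..<n} \<and> length xs = d}"
    by (rule finite_lists_length_eq) simp
  ultimately show ?thesis by (rule finite_subset)
qed

lemma plane_idx: "y \<in> plane d n K x \<Longrightarrow> y \<in> idx d n"
  unfolding plane_def by simp

lemma self_in_plane: "x \<in> idx d n \<Longrightarrow> x \<in> plane d n K x"
  unfolding plane_def by auto

lemma plane_eq: "y \<in> plane d n K x \<Longrightarrow> plane d n K y = plane d n K x"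
  unfolding plane_def by auto

lemma plane_full: "plane d n {..<d} x = idx d n"
  unfolding plane_def by auto

lemma plane_subset_plane: "K' \<subseteq> K \<Longrightarrow> y \<in> plane d n K x \<Longrightarrow> plane d n K' y \<subseteq> plane d n K x"
  unfolding plane_def by auto

lemma line_subset_plane: "i \<in> K \<Longrightarrow> line d n i x \<subseteq> plane d n K x"
  unfolding plane_def line_def by auto

lemma plane_Int_plane:
  "y \<in> plane d n K1 x1 \<Longrightarrow> y \<in> plane d n K2 x2 \<Longrightarrow>
    plane d n K1 x1 \<inter> plane d n K2 x2 = plane d n (K1 \<inter> K2) y"
  unfolding plane_def by auto

lemma plane_slice:
  "y \<in> plane d n K x \<Longrightarrow> i < d \<Longrightarrow> {v \<in> plane d n K x. v ! i = y ! i} = plane d n (K - {i}) y"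
  unfolding plane_def by auto

lemma double_permutation_line_card:
  assumes A: "double_permutation d n A" and "x \<in> idx d n" "i < d"
  shows "card (support d n A \<inter> line d n i x) = 2"
proof -
  let ?L = "line d n i x" and ?S = "support d n A"
  have L: "?L \<subseteq> idx d n" unfolding line_def by auto
  have "1 = (\<Sum>y\<in>?L. A y)"
    using A assms(2,3) unfolding double_permutation_def polystochastic_def by simp
  also have "\<dots> = (\<Sum>y\<in>?S \<inter> ?L. A y)"
    by (rule sum.mono_neutral_right) (use finite_subset[OF L finite_idx] L in \<open>auto simp: support_def\<close>)
  also have "\<dots> = (\<Sum>y\<in>?S \<inter> ?L. 1/2)"
    using A unfolding double_permutation_def support_def by (intro sum.cong) auto
  finally show ?thesis by simp
qed

lemma double_permutation_unitrade:
  assumes "double_permutation d n A" "K \<subseteq> {..<d}"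
  shows "unitrade_in d n K (plane d n K x) (support d n A \<inter> plane d n K x)"
  unfolding unitrade_in_def
proof (intro ballI)
  fix y i assume y: "y \<in> plane d n K x" and i: "i \<in> K"
  have "line d n i y \<subseteq> plane d n K x"
    using line_subset_plane[OF i] plane_subset_plane[OF order_refl y] by blast
  then have "support d n A \<inter> plane d n K x \<inter> line d n i y = support d n A \<inter> line d n i y"
    by blast
  moreover have "y \<in> idx d n" "i < d" using plane_idx[OF y] i assms(2) by auto
  ultimately show "card (support d n A \<inter> plane d n K x \<inter> line d n i y) = 0
      \<or> card (support d n A \<inter> plane d n K x \<inter> line d n i y) = 2"
    using double_permutation_line_card[OF assms(1)] by simp
qed

definition connected_bipartite_planes :: "nat \<Rightarrow> nat \<Rightarrow> nat list set \<Rightarrow> nat \<Rightarrow> bool" where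
  "connected_bipartite_planes d n S m \<longleftrightarrow>
     (\<forall>K y. K \<subseteq> {..<d} \<longrightarrow> card K = m \<longrightarrow> y \<in> idx d n \<longrightarrow>
        connected_set d n (S \<inter> plane d n K y) \<and> bipartite_set d n (S \<inter> plane d n K y))"

lemma obtain_four_distinct:
  assumes "4 \<le> card K"
  obtains i j l g where "i \<in> K" "j \<in> K" "l \<in> K" "g \<in> K" "distinct [i, j, l, g]"
proof -
  have "finite K" by (rule card_ge_0_finite) (use assms in simp)
  moreover obtain g where g: "g \<in> K" using assms by fastforce
  ultimately have "3 \<le> card (K - {g})" using assms by simp
  then obtain T where T: "T \<subseteq> K - {g}" "card T = 3" by (rule obtain_subset_with_card_n)
  then obtain i j l where "T = {i, j, l}" "i \<noteq> j" "j \<noteq> l" "i \<noteq> l" by (auto simp: card_3_iff)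
  then show thesis using that T(1) g by auto
qed

locale line_transversal =
  fixes d n :: nat and S :: "nat list set"
  assumes meets_line: "x \<in> idx d n \<Longrightarrow> i < d \<Longrightarrow> S \<inter> line d n i x \<noteq> {}"

lemma double_permutation_line_transversal:
  "double_permutation d n A \<Longrightarrow> line_transversal d n (support d n A)"
  by unfold_locales (use double_permutation_line_card in fastforce)

context line_transversal
begin

lemma connected_plane_step:
  assumes codim1: "\<And>h y. h \<in> K \<Longrightarrow> y \<in> idx d n \<Longrightarrow> connected_set d n (S \<inter> plane d n (K - {h}) y)"
    and K: "K \<subseteq> {..<d}" "i \<in> K" "j \<in> K" "l \<in> K" "distinct [i, j, l]"
  shows "connected_set d n (S \<inter> plane d n K x)"
  unfolding connected_set_def
proof (intro ballI)
  fix a b assume a: "a \<in> S \<inter> plane d n K x" and b: "b \<in> S \<inter> plane d n K x"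
  have ab: "a \<in> idx d n" "b \<in> idx d n" using a b plane_idx by auto
  have dirs: "i < d" "j < d" "l < d" using K by auto
  define z where "z = a[i := b ! i]"
  have "z \<in> idx d n" using ab dirs unfolding z_def idx_def by (auto simp: nth_list_update)
  then obtain c where c: "c \<in> S" "c \<in> line d n l z" using meets_line dirs(3) by blast
  have "c \<in> plane d n (K - {j}) a" "c \<in> plane d n (K - {i}) b"
    using c a b ab K dirs unfolding line_def plane_def z_def idx_def by (auto simp: nth_list_update)
  moreover have sub: "S \<inter> plane d n (K - {h}) y \<subseteq> S \<inter> plane d n K x"
    if "y \<in> plane d n K x" for h y
    using plane_subset_plane[OF _ that] by blast
  ultimately show "(a, b) \<in> {(u, v). u \<in> S \<inter> plane d n K x \<and> v \<in> S \<inter> plane d n K x \<and> adjacent d n u v}\<^sup>*"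
    using connected_set_link[OF codim1[OF K(3) ab(1)] codim1[OF K(2) ab(2)] sub sub]
      a b ab c(1) self_in_plane by blast
qed

lemma proper_colouring_transfer:
  assumes codim2: "\<And>h h' y. h \<in> K \<Longrightarrow> h' \<in> K \<Longrightarrow> h \<noteq> h' \<Longrightarrow> y \<in> idx d n \<Longrightarrow>
      connected_set d n (S \<inter> plane d n (K - {h, h'}) y)"
    and bip: "bipartite_set d n (S \<inter> plane d n (K - {j}) a)"
    and K: "K \<subseteq> {..<d}" "i \<in> K" "j \<in> K" "l \<in> K" "g \<in> K" "distinct [i, j, l, g]"
    and a: "a \<in> idx d n" and p: "p \<in> plane d n K a"
    and on_core: "proper_colouring d n (S \<inter> plane d n (K - {l}) p) \<sigma>"
    and on_layers: "\<And>v. v \<in> plane d n K a \<Longrightarrow> proper_colouring d n (S \<inter> plane d n (K - {i}) v) \<sigma>"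
  shows "proper_colouring d n (S \<inter> plane d n (K - {j}) a) \<sigma>"
proof -
  let ?W = "S \<inter> plane d n (K - {j}) a"
  let ?C = "?W \<inter> plane d n (K - {l}) p"
  obtain \<tau> where \<tau>: "proper_colouring d n ?W \<tau>" using bip unfolding bipartite_set_def by blast
  have dirs: "i < d" "j < d" "l < d" "g < d" using K by auto
  have W_sub: "plane d n (K - {j}) a \<subseteq> plane d n K a"
    by (rule plane_subset_plane) (auto intro: self_in_plane a)
  have C_conn: "connected_set d n ?C"
  proof (cases "?C = {}")
    case False
    then obtain q where q: "q \<in> ?C" by blast
    then have "plane d n (K - {j}) a \<inter> plane d n (K - {l}) p = plane d n ((K - {j}) \<inter> (K - {l})) q"
      by (intro plane_Int_plane) auto
    also have "(K - {j}) \<inter> (K - {l}) = K - {j, l}" by blast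
    finally have "?C = S \<inter> plane d n (K - {j, l}) q" by blast
    moreover have "q \<in> idx d n" using q plane_idx by auto
    ultimately show ?thesis using codim2[of j l q] K by simp
  qed simp
  have C_col: "proper_colouring d n ?C \<sigma>"
    by (rule proper_colouring_subset[OF on_core]) blast
  have cover: "\<exists>Y. u \<in> Y \<and> Y \<subseteq> ?W \<and> Y \<inter> ?C \<noteq> {} \<and> connected_set d n Y \<and> proper_colouring d n Y \<sigma>"
    if u: "u \<in> ?W" for u
  proof (intro exI conjI)
    let ?Y = "S \<inter> plane d n (K - {i, j}) u"
    have ua: "u \<in> plane d n K a" using u W_sub by auto
    then have "u \<in> idx d n" by (rule plane_idx)
    then show "u \<in> ?Y" using u by (simp add: self_in_plane)
    have "plane d n (K - {i, j}) u \<subseteq> plane d n (K - {j}) a"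
      by (rule plane_subset_plane) (use u in auto)
    then show "?Y \<subseteq> ?W" by auto
    show "connected_set d n ?Y" using codim2 K \<open>u \<in> idx d n\<close> by simp
    have "plane d n (K - {i, j}) u \<subseteq> plane d n (K - {i}) u"
      by (rule plane_subset_plane) (auto intro: self_in_plane \<open>u \<in> idx d n\<close>)
    then show "proper_colouring d n ?Y \<sigma>"
      by (intro proper_colouring_subset[OF on_layers[OF ua]]) auto
    define z where "z = p[i := u ! i, j := a ! j]"
    have "p \<in> idx d n" using p by (rule plane_idx)
    then have "z \<in> idx d n" using \<open>u \<in> idx d n\<close> a dirs unfolding z_def idx_def by (auto simp: nth_list_update)
    then obtain q where q: "q \<in> S" "q \<in> line d n g z" using meets_line dirs(4) by blast
    have "length p = d" using \<open>p \<in> idx d n\<close> by (simp add: idx_def)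
    then have q_coord: "q ! r = (if r = i then u ! i else if r = j then a ! j else p ! r)"
      if "r < d" "r \<noteq> g" for r
      using q that K dirs unfolding line_def z_def by (auto simp: nth_list_update)
    have q_out: "q ! r = a ! r" if "r < d" "r \<notin> K" for r
    proof -
      have "r \<noteq> g" "r \<noteq> i" "r \<noteq> j" using that K by auto
      then show ?thesis using q_coord[OF that(1)] that p unfolding plane_def by simp
    qed
    have "q \<in> idx d n" using q unfolding line_def by blast
    then have "q \<in> ?Y" "q \<in> ?C"
      using q(1) q_out q_coord[of i] q_coord[of j] q_coord[of l] u ua p K dirs
      unfolding plane_def by auto
    then show "?Y \<inter> ?C \<noteq> {}" by blast
  qed
  show ?thesis
    by (rule proper_colouring_of_connected_cover[OF \<tau> C_conn _ C_col cover]) blast+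
qed

lemma bipartite_plane_step:
  assumes codim1: "\<And>h y. h \<in> K \<Longrightarrow> y \<in> idx d n \<Longrightarrow> bipartite_set d n (S \<inter> plane d n (K - {h}) y)"
    and codim2: "\<And>h h' y. h \<in> K \<Longrightarrow> h' \<in> K \<Longrightarrow> h \<noteq> h' \<Longrightarrow> y \<in> idx d n \<Longrightarrow>
      connected_set d n (S \<inter> plane d n (K - {h, h'}) y)"
    and K: "K \<subseteq> {..<d}" "i \<in> K" "j \<in> K" "l \<in> K" "g \<in> K" "distinct [i, j, l, g]"
  shows "bipartite_set d n (S \<inter> plane d n K x)"
proof (cases "S \<inter> plane d n K x = {}")
  case False
  then obtain p where p: "p \<in> S" "p \<in> plane d n K x" by blast
  have p_idx: "p \<in> idx d n" using p(2) by (rule plane_idx)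
  have P: "plane d n K x = plane d n K p" using plane_eq[OF p(2)] by simp
  have dirs: "i < d" "j < d" "l < d" using K by auto
  let ?U = "S \<inter> plane d n K p" and ?V = "S \<inter> plane d n (K - {l}) p"
  have layer: "{u \<in> ?U. u ! i = v ! i} = S \<inter> plane d n (K - {i}) v" if "v \<in> plane d n K p" for v
    using plane_slice[OF that dirs(1)] by auto
  have "\<exists>c. proper_colouring d n {u \<in> ?U. u ! i = t} c" for t
  proof (cases "{u \<in> ?U. u ! i = t} = {}")
    case False
    then obtain v where "v \<in> ?U" "v ! i = t" by blast
    then show ?thesis
      using layer[of v] codim1[OF K(2), of v] plane_idx unfolding bipartite_set_def by auto
  next
    case True
    show ?thesis unfolding True by simp
  qed
  then obtain c where c: "\<And>t. proper_colouring d n {u \<in> ?U. u ! i = t} (c t)" by metis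
  obtain \<rho> where \<rho>: "proper_colouring d n ?V \<rho>"
    using codim1[OF K(4) p_idx] unfolding bipartite_set_def by blast
  have V_sub: "plane d n (K - {l}) p \<subseteq> plane d n K p"
    by (rule plane_subset_plane) (auto intro: self_in_plane p_idx)
  have overlaps: "connected_set d n {u \<in> ?U \<inter> ?V. u ! i = t}" for t
  proof (cases "{u \<in> ?U \<inter> ?V. u ! i = t} = {}")
    case False
    then obtain v where v: "v \<in> ?V" "v ! i = t" by blast
    have "{u \<in> ?U \<inter> ?V. u ! i = t} = S \<inter> {u \<in> plane d n (K - {l}) p. u ! i = v ! i}"
      using V_sub v(2) by auto
    also have "\<dots> = S \<inter> plane d n (K - {l} - {i}) v"
      using plane_slice[of v d n "K - {l}" p i] v(1) dirs by simp
    also have "K - {l} - {i} = K - {i, l}" by auto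
    finally have "{u \<in> ?U \<inter> ?V. u ! i = t} = S \<inter> plane d n (K - {i, l}) v" .
    moreover have "v \<in> idx d n" using v(1) plane_idx by blast
    ultimately show ?thesis
      using codim2[OF K(2,4)] K by simp
  next
    case True
    show ?thesis unfolding True by simp
  qed
  obtain \<sigma> where \<sigma>_core: "\<And>u. u \<in> ?U \<inter> ?V \<Longrightarrow> \<sigma> u = \<rho> u"
    and \<sigma>_layers: "\<And>t. proper_colouring d n {u \<in> ?U. u ! i = t} \<sigma>"
    using proper_colouring_glue_layers[where lay = "\<lambda>u. u ! i", OF c \<rho> overlaps] by blast
  have "proper_colouring d n ?U \<sigma>"
    unfolding proper_colouring_def
  proof (intro ballI impI)
    fix a b assume a: "a \<in> ?U" and b: "b \<in> ?U" and ab: "adjacent d n a b"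
    show "\<sigma> a \<noteq> \<sigma> b"
    proof (cases "a ! i = b ! i")
      case True
      then show ?thesis using \<sigma>_layers[of "a ! i"] a b ab unfolding proper_colouring_def by auto
    next
      case False
      have a_idx: "a \<in> idx d n" using a plane_idx by blast
      obtain h where h: "b \<in> line d n h a" using ab unfolding adjacent_def by blast
      with False dirs(1) have "h = i" unfolding line_def by auto
      with h have "b \<in> line d n i a" by simp
      then have ab_W: "a \<in> S \<inter> plane d n (K - {j}) a" "b \<in> S \<inter> plane d n (K - {j}) a"
        using a b a_idx line_subset_plane[of i "K - {j}"] K self_in_plane by auto
      have Pa: "plane d n K a = plane d n K p" using a plane_eq by blast
      have "proper_colouring d n (S \<inter> plane d n (K - {j}) a) \<sigma>"
      proof (rule proper_colouring_transfer[OF codim2 codim1[OF K(3) a_idx] K a_idx])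
        show "p \<in> plane d n K a" unfolding Pa by (rule self_in_plane[OF p_idx])
        show "proper_colouring d n ?V \<sigma>"
          using \<rho> \<sigma>_core V_sub unfolding proper_colouring_def by auto
        show "proper_colouring d n (S \<inter> plane d n (K - {i}) v) \<sigma>" if "v \<in> plane d n K a" for v
          using \<sigma>_layers[of "v ! i"] layer[of v] that unfolding Pa by simp
      qed auto
      then show ?thesis using ab_W ab unfolding proper_colouring_def by blast
    qed
  qed
  then show ?thesis unfolding bipartite_set_def P by blast
qed simp

lemma connected_bipartite_planes_step:
  assumes "2 \<le> m" "connected_bipartite_planes d n S m" "connected_bipartite_planes d n S (Suc m)"
  shows "connected_bipartite_planes d n S (Suc (Suc m))"
  unfolding connected_bipartite_planes_def
proof (intro allI impI)
  fix K y assume K: "K \<subseteq> {..<d}" "card K = Suc (Suc m)" and y: "y \<in> idx d n"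
  have "finite K" using K(1) finite_subset by blast
  have "4 \<le> card K" using K(2) assms(1) by simp
  then obtain i j l g where dirs: "i \<in> K" "j \<in> K" "l \<in> K" "g \<in> K" "distinct [i, j, l, g]"
    by (rule obtain_four_distinct)
  have codim1: "connected_set d n (S \<inter> plane d n (K - {h}) y')" "bipartite_set d n (S \<inter> plane d n (K - {h}) y')"
    if "h \<in> K" "y' \<in> idx d n" for h y'
  proof -
    have "card (K - {h}) = Suc m" using K(2) that(1) \<open>finite K\<close> by simp
    then show "connected_set d n (S \<inter> plane d n (K - {h}) y')" "bipartite_set d n (S \<inter> plane d n (K - {h}) y')"
      using assms(3) K(1) that(2) unfolding connected_bipartite_planes_def by blast+
  qed
  have codim2: "connected_set d n (S \<inter> plane d n (K - {h, h'}) y')"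
    if "h \<in> K" "h' \<in> K" "h \<noteq> h'" "y' \<in> idx d n" for h h' y'
  proof -
    have "card (K - {h, h'}) = m"
      using K(2) that \<open>finite K\<close> by (simp add: card_Diff_subset)
    then show ?thesis
      using assms(2) K(1) that(4) unfolding connected_bipartite_planes_def by blast
  qed
  have "connected_set d n (S \<inter> plane d n K y)"
    by (rule connected_plane_step[OF codim1(1) K(1) dirs(1-3)]) (use dirs(5) in auto)
  moreover have "bipartite_set d n (S \<inter> plane d n K y)"
    by (rule bipartite_plane_step[OF codim1(2) codim2 K(1) dirs])
  ultimately show "connected_set d n (S \<inter> plane d n K y) \<and> bipartite_set d n (S \<inter> plane d n K y)" ..
qed

lemma connected_bipartite_planes_upward:
  assumes "2 \<le> k" "connected_bipartite_planes d n S k" "connected_bipartite_planes d n S (Suc k)"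
    and "k \<le> m"
  shows "connected_bipartite_planes d n S m"
proof -
  have "connected_bipartite_planes d n S m \<and> connected_bipartite_planes d n S (Suc m)"
    using \<open>k \<le> m\<close>
  proof (induction rule: dec_induct)
    case (step m)
    then show ?case using connected_bipartite_planes_step[of m] assms(1) by auto
  qed (use assms in auto)
  then show ?thesis ..
qed

end

lemma connected_bipartite_planes_whole:
  assumes "connected_bipartite_planes d n S d" "S \<subseteq> idx d n"
  shows "connected_set d n S \<and> bipartite_set d n S"
proof (cases "S = {}")
  case False
  then obtain y where "y \<in> idx d n" using assms(2) by blast
  then have "connected_set d n (S \<inter> plane d n {..<d} y) \<and> bipartite_set d n (S \<inter> plane d n {..<d} y)"
    using assms(1) unfolding connected_bipartite_planes_def by simp
  moreover have "S \<inter> plane d n {..<d} y = S" using assms(2) by (simp add: plane_full Int_absorb2)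
  ultimately show ?thesis by simp
qed simp

theorem mainTheorem4:
  fixes d n k :: nat and A :: "nat list \<Rightarrow> real"
  assumes "double_permutation d n A"
    and "2 \<le> k" and "k \<le> d - 1"
    and "\<forall>K x. K \<subseteq> {..<d} \<and> (card K = k \<or> card K = k + 1) \<and> x \<in> idx d n \<longrightarrow>
           connected_bitrade_in d n K (plane d n K x) (support d n A \<inter> plane d n K x)"
  shows "connected_bitrade_in d n {..<d} (idx d n) (support d n A)"
proof -
  let ?S = "support d n A"
  interpret line_transversal d n ?S
    using assms(1) by (rule double_permutation_line_transversal)
  have "connected_bipartite_planes d n ?S k" "connected_bipartite_planes d n ?S (Suc k)"
    using assms(4) unfolding connected_bipartite_planes_def connected_bitrade_in_def bitrade_in_iff
    by auto
  then have "connected_bipartite_planes d n ?S d"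
    using connected_bipartite_planes_upward assms(2,3) by simp
  then have "connected_set d n ?S \<and> bipartite_set d n ?S"
    by (rule connected_bipartite_planes_whole) (auto simp: support_def)
  moreover have "unitrade_in d n {..<d} (idx d n) ?S"
    using double_permutation_unitrade[OF assms(1), of "{..<d}" undefined]
    by (simp add: plane_full Int_absorb2 support_def)
  ultimately show ?thesis
    unfolding connected_bitrade_in_def bitrade_in_iff by simp
qed

end
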